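(* Let $a,b\colon\mathbb N\to\mathbb Z\setminus\{0\}$ be injective sequences and let $F\subset\mathbb N$ be arbitrary. Then there exist a probability space $(X,\mathcal X,\mu)$, measure preserving transformations $T,S\colon X\to X$, both Bernoulli, and $A\in\mathcal X$ such that for every $n\in\mathbb N$, $$\mu(T^{-a(n)}A\cap S^{-b(n)}A)=\begin{cases}0 & \text{if } n\in F,\\ 1/4 & \text{if } n\notin F.\end{cases}$$
   Context: A measure preserving transformation $T$ of $(X,\mathcal X,\mu)$ is called Bernoulli if $(X,\mathcal X,\mu,T)$ is isomorphic to a (two-sided) Bernoulli shift on finitely many symbols; in particular it is invertible. *)

theory Defs
  imports "HOL-Probability.Probability"
begin

definition mpt :: "'a measure \<Rightarrow> ('a \<Rightarrow> 'a) \<Rightarrow> bool" where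
  "mpt M T \<longleftrightarrow> T \<in> measurable M M \<and> distr M M T = M"

definition invertible_mpt :: "'a measure \<Rightarrow> ('a \<Rightarrow> 'a) \<Rightarrow> bool" where
  "invertible_mpt M T \<longleftrightarrow> mpt M T \<and> bij_betw T (space M) (space M)
     \<and> mpt M (inv_into (space M) T)"

definition bernoulli_shift_space :: "nat pmf \<Rightarrow> (int \<Rightarrow> nat) measure" where
  "bernoulli_shift_space p = PiM (UNIV :: int set) (\<lambda>_. measure_pmf p)"

definition shift :: "(int \<Rightarrow> 'b) \<Rightarrow> int \<Rightarrow> 'b" where
  "shift x = (\<lambda>i. x (i + 1))"

definition mpt_iso :: "'a measure \<Rightarrow> ('a \<Rightarrow> 'a) \<Rightarrow> 'b measure \<Rightarrow> ('b \<Rightarrow> 'b) \<Rightarrow> bool" where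
  "mpt_iso M T N U \<longleftrightarrow> (\<exists>X0 Y0 \<phi>.
     X0 \<in> sets M \<and> Y0 \<in> sets N \<and>
     emeasure M (space M - X0) = 0 \<and> emeasure N (space N - Y0) = 0 \<and>
     T ` X0 \<subseteq> X0 \<and> U ` Y0 \<subseteq> Y0 \<and>
     bij_betw \<phi> X0 Y0 \<and> (\<forall>x\<in>X0. \<phi> (T x) = U (\<phi> x)) \<and>
     \<phi> \<in> measurable (restrict_space M X0) (restrict_space N Y0) \<and>
     inv_into X0 \<phi> \<in> measurable (restrict_space N Y0) (restrict_space M X0) \<and>
     distr (restrict_space M X0) (restrict_space N Y0) \<phi> = restrict_space N Y0)"

definition bernoulli :: "'a measure \<Rightarrow> ('a \<Rightarrow> 'a) \<Rightarrow> bool" where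
  "bernoulli M T \<longleftrightarrow> prob_space M \<and> invertible_mpt M T \<and>
     (\<exists>p. finite (set_pmf p) \<and> mpt_iso M T (bernoulli_shift_space p) shift)"

definition zpow :: "'a measure \<Rightarrow> ('a \<Rightarrow> 'a) \<Rightarrow> int \<Rightarrow> 'a \<Rightarrow> 'a" where
  "zpow M T k = (if k \<ge> 0 then T ^^ nat k else (inv_into (space M) T) ^^ nat (- k))"

definition zpreimage :: "'a measure \<Rightarrow> ('a \<Rightarrow> 'a) \<Rightarrow> int \<Rightarrow> 'a set \<Rightarrow> 'a set" where
  "zpreimage M T k A = zpow M T k -` A \<inter> space M"

end

theory Submission
  imports Defs
begin

(* Take the two-sided Bernoulli shift whose symbol at site i \<in> \<int> is a pair of
   independent fair bits, i.e. a family of i.i.d. fair bits coin_at j indexed by j \<in> \<int> \<times> bool;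
   T is the shift and A = {coin_at (0,False) = 1}, so T^{-k} A = {coin_at (k,False) = 1}.
   A "recoding" x \<mapsto> (j \<mapsto> coin_at (\<rho> j) x, possibly flipped) for a permutation \<rho> of the sites
   preserves the i.i.d. law, hence is an automorphism; conjugating the shift by a recoding gives
   a second Bernoulli transformation S with S^{-k} A = {coin_at (\<rho> (k,False)) = 1, possibly flipped}.
   Choosing \<rho> with \<rho> (b n, False) = (a n, False) plus a flip when n \<in> F makes the two events
   complementary (measure 0), and \<rho> (b n, False) = (b n, True) when n \<notin> F makes them
   independent (measure 1/4). *)

definition coin :: "nat pmf" where
  "coin = pmf_of_set {0, 1}"

definition coin_pair :: "nat pmf" where
  "coin_pair = map_pmf prod_encode (pair_pmf coin coin)"

definition coin_space :: "(int \<Rightarrow> nat) measure" where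
  "coin_space = bernoulli_shift_space coin_pair"

definition half :: "bool \<Rightarrow> nat \<Rightarrow> nat" where
  "half h s = (if h then snd (prod_decode s) else fst (prod_decode s))"

definition coin_at :: "int \<times> bool \<Rightarrow> (int \<Rightarrow> nat) \<Rightarrow> nat" where
  "coin_at j x = half (snd j) (x (fst j))"

definition flip :: "nat \<Rightarrow> nat" where
  "flip z = (if z = 0 then 1 else if z = 1 then 0 else z)"

definition flip_if :: "bool \<Rightarrow> nat \<Rightarrow> nat" where
  "flip_if e z = (if e then flip z else z)"

definition recode :: "(int \<times> bool \<Rightarrow> int \<times> bool) \<Rightarrow> (int \<times> bool \<Rightarrow> bool)
    \<Rightarrow> (int \<Rightarrow> nat) \<Rightarrow> (int \<Rightarrow> nat)" where
  "recode \<rho> \<epsilon> x = (\<lambda>i. prod_encode (flip_if (\<epsilon> (i, False)) (coin_at (\<rho> (i, False)) x),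
                                     flip_if (\<epsilon> (i, True)) (coin_at (\<rho> (i, True)) x)))"

definition next_site :: "int \<times> bool \<Rightarrow> int \<times> bool" where
  "next_site j = (fst j + 1, snd j)"

lemma coin_at_recode: "coin_at j (recode \<rho> \<epsilon> x) = flip_if (\<epsilon> j) (coin_at (\<rho> j) x)"
  by (cases j) (auto simp: coin_at_def half_def recode_def prod_encode_inverse)

lemma coin_at_ext:
  assumes "\<And>j. coin_at j x = coin_at j y"
  shows "x = y"
proof
  fix i
  from assms[of "(i, False)"] assms[of "(i, True)"]
  have "prod_decode (x i) = prod_decode (y i)"
    by (simp add: coin_at_def half_def prod_eq_iff)
  then show "x i = y i" by (metis prod_decode_inverse)
qed

lemma flip_if_flip_if: "flip_if u (flip_if v z) = flip_if (u \<noteq> v) z"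
  by (auto simp: flip_if_def flip_def)

lemma flip_if_eq_iff: "flip_if e z = w \<longleftrightarrow> z = flip_if e w"
  by (auto simp: flip_if_def flip_def)

lemma recode_comp:
  "recode \<tau> \<delta> (recode \<rho> \<epsilon> x) = recode (\<rho> \<circ> \<tau>) (\<lambda>j. \<delta> j \<noteq> \<epsilon> (\<tau> j)) x"
  by (rule coin_at_ext) (simp add: coin_at_recode flip_if_flip_if)

lemma recode_id: "recode id (\<lambda>_. False) x = x"
  by (rule coin_at_ext) (simp add: coin_at_recode flip_if_def)

abbreviation recode_inv :: "(int \<times> bool \<Rightarrow> int \<times> bool) \<Rightarrow> (int \<times> bool \<Rightarrow> bool)
    \<Rightarrow> (int \<Rightarrow> nat) \<Rightarrow> (int \<Rightarrow> nat)" where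
  "recode_inv \<rho> \<epsilon> \<equiv> recode (inv \<rho>) (\<lambda>j. \<epsilon> (inv \<rho> j))"

lemma recode_inv_recode: "bij \<rho> \<Longrightarrow> recode_inv \<rho> \<epsilon> (recode \<rho> \<epsilon> x) = x"
  by (simp add: recode_comp bij_is_surj surj_f_inv_f recode_id[unfolded id_def] comp_def)

lemma recode_recode_inv: "bij \<rho> \<Longrightarrow> recode \<rho> \<epsilon> (recode_inv \<rho> \<epsilon> x) = x"
  by (simp add: recode_comp bij_is_inj recode_id[unfolded id_def] comp_def)

lemma bij_recode: "bij \<rho> \<Longrightarrow> bij (recode \<rho> \<epsilon>)"
  by (rule o_bij[where g = "recode_inv \<rho> \<epsilon>"])
    (simp_all add: fun_eq_iff recode_inv_recode recode_recode_inv)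

lemma inv_recode: "bij \<rho> \<Longrightarrow> inv (recode \<rho> \<epsilon>) = recode_inv \<rho> \<epsilon>"
  by (rule inv_equality) (simp_all add: recode_inv_recode recode_recode_inv)

lemma coin_at_shift: "coin_at j (shift x) = coin_at (next_site j) x"
  by (simp add: coin_at_def shift_def next_site_def)

lemma shift_recode: "shift = recode next_site (\<lambda>_. False)"
  by (rule ext, rule coin_at_ext) (simp add: coin_at_recode flip_if_def coin_at_shift)

lemma bij_next_site: "bij next_site"
  by (rule o_bij[where g = "\<lambda>j. (fst j - 1, snd j)"]) (auto simp: next_site_def fun_eq_iff)

section \<open>The bits are independent fair coins\<close>

lemma space_coin_space: "space coin_space = UNIV"
  by (simp add: coin_space_def bernoulli_shift_space_def space_PiM)

lemma sets_coin_space: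
  "sets coin_space = sets (PiM UNIV (\<lambda>_::int. count_space (UNIV :: nat set)))"
  unfolding coin_space_def bernoulli_shift_space_def by (rule sets_PiM_cong) auto

lemma prob_space_coin_space: "prob_space coin_space"
  unfolding coin_space_def bernoulli_shift_space_def
  by (rule prob_space_PiM) (simp add: prob_space_measure_pmf)

lemma measure_cylinder:
  assumes "finite K"
  shows "measure coin_space {x. \<forall>k\<in>K. x k \<in> E k} = (\<Prod>k\<in>K. measure coin_pair (E k))"
proof -
  interpret product_prob_space "\<lambda>_::int. measure_pmf coin_pair" UNIV by unfold_locales
  have "emeasure (PiM UNIV (\<lambda>_::int. measure_pmf coin_pair))
      {x\<in>space (PiM UNIV (\<lambda>_::int. measure_pmf coin_pair)). \<forall>k\<in>K. x k \<in> E k}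
      = (\<Prod>k\<in>K. emeasure (measure_pmf coin_pair) (E k))"
    by (rule emeasure_PiM_Collect) (use assms in auto)
  then have "emeasure coin_space {x. \<forall>k\<in>K. x k \<in> E k}
      = ennreal (\<Prod>k\<in>K. measure coin_pair (E k))"
    by (simp add: coin_space_def bernoulli_shift_space_def space_PiM prod_ennreal
        measure_pmf.emeasure_eq_measure)
  then show ?thesis
    using prob_space.finite_measure[OF prob_space_coin_space]
    by (simp add: finite_measure.emeasure_eq_measure prod_nonneg)
qed

lemma measure_coin_pair_rect:
  "measure coin_pair {s. half False s \<in> U \<and> half True s \<in> V} = measure coin U * measure coin V"
proof -
  have "prod_encode -` {s. half False s \<in> U \<and> half True s \<in> V} = U \<times> V"
    by (auto simp: half_def prod_encode_inverse)
  then show ?thesis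
    by (simp add: coin_pair_def measure_map_pmf measure_pmf_prob_product)
qed

lemma measurable_coin_at: "coin_at j \<in> coin_space \<rightarrow>\<^sub>M count_space UNIV"
proof -
  have "(\<lambda>x. x (fst j)) \<in> coin_space \<rightarrow>\<^sub>M measure_pmf coin_pair"
    unfolding coin_space_def bernoulli_shift_space_def
    by (rule measurable_component_singleton) simp
  moreover have "half (snd j) \<in> measure_pmf coin_pair \<rightarrow>\<^sub>M count_space UNIV"
    by (simp add: measurable_pmf_measure1)
  ultimately show ?thesis
    unfolding coin_at_def by (rule measurable_compose[where f = "\<lambda>x. x (fst j)"])
qed

text \<open>Joint law of finitely many bits: the events {coin_at j \<in> B j} multiply.  Sites are grouped
  by their integer coordinate, which turns the event into a product cylinder.\<close>
lemma measure_bits_cylinder: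
  assumes J: "finite J"
  shows "measure coin_space {x. \<forall>j\<in>J. coin_at j x \<in> B j} = (\<Prod>j\<in>J. measure coin (B j))"
proof -
  define U where "U k h = (if (k, h) \<in> J then B (k, h) else UNIV)" for k h
  define E where "E k = {s. half False s \<in> U k False \<and> half True s \<in> U k True}" for k
  have grouped: "{x. \<forall>j\<in>J. coin_at j x \<in> B j} = {x. \<forall>k\<in>fst ` J. x k \<in> E k}"
  proof (intro set_eqI iffI)
    fix x assume "x \<in> {x. \<forall>j\<in>J. coin_at j x \<in> B j}"
    then show "x \<in> {x. \<forall>k\<in>fst ` J. x k \<in> E k}"
      by (auto simp: E_def U_def coin_at_def)
  next
    fix x assume x: "x \<in> {x. \<forall>k\<in>fst ` J. x k \<in> E k}"
    have "coin_at (k, h) x \<in> B (k, h)" if kh: "(k, h) \<in> J" for k h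
    proof -
      from x kh have "x k \<in> E k" by force
      with kh show ?thesis by (cases h) (auto simp: coin_at_def E_def U_def)
    qed
    then show "x \<in> {x. \<forall>j\<in>J. coin_at j x \<in> B j}" by auto
  qed
  have "measure coin_space {x. \<forall>j\<in>J. coin_at j x \<in> B j}
      = measure coin_space {x. \<forall>k\<in>fst ` J. x k \<in> E k}"
    by (simp only: grouped)
  also have "\<dots> = (\<Prod>k\<in>fst ` J. measure coin_pair (E k))"
    using J by (intro measure_cylinder) simp
  also have "\<dots> = (\<Prod>k\<in>fst ` J. measure coin (U k False) * measure coin (U k True))"
    by (simp only: E_def measure_coin_pair_rect)
  also have "\<dots> = (\<Prod>k\<in>fst ` J. \<Prod>h\<in>UNIV. measure coin (U k h))"
    by (simp add: UNIV_bool)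
  also have "\<dots> = (\<Prod>j\<in>fst ` J \<times> UNIV. measure coin (U (fst j) (snd j)))"
    by (simp add: prod.cartesian_product split_def)
  also have "\<dots> = (\<Prod>j\<in>J. measure coin (U (fst j) (snd j)))"
  proof (rule prod.mono_neutral_right)
    show "finite (fst ` J \<times> (UNIV :: bool set))" using J by simp
    show "J \<subseteq> fst ` J \<times> UNIV" by force
    show "\<forall>j\<in>fst ` J \<times> UNIV - J. measure coin (U (fst j) (snd j)) = 1"
      by (auto simp: U_def)
  qed
  also have "\<dots> = (\<Prod>j\<in>J. measure coin (B j))"
    by (rule prod.cong) (auto simp: U_def)
  finally show ?thesis .
qed

lemma indep_coins: "prob_space.indep_vars coin_space (\<lambda>_. count_space UNIV) coin_at UNIV"
proof -
  interpret prob_space coin_space by (rule prob_space_coin_space)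
  have single: "prob (coin_at j -` B \<inter> space coin_space) = measure coin B" for j B
    using measure_bits_cylinder[of "{j}" "\<lambda>_. B"] by (simp add: space_coin_space vimage_def)
  show ?thesis
    unfolding indep_vars_def2 indep_sets_def
  proof (intro conjI ballI allI impI)
    show "random_variable (count_space UNIV) (coin_at j)" for j by (rule measurable_coin_at)
    show "{coin_at j -` A \<inter> space coin_space |A. A \<in> sets (count_space UNIV)} \<subseteq> events" for j
      using measurable_coin_at measurable_sets by blast
    fix J :: "(int \<times> bool) set" and A
    assume J: "J \<subseteq> UNIV" "J \<noteq> {}" "finite J"
      and A: "A \<in> Pi J (\<lambda>j. {coin_at j -` B \<inter> space coin_space |B. B \<in> sets (count_space UNIV)})"
    then have "\<forall>j\<in>J. \<exists>B. A j = coin_at j -` B \<inter> space coin_space" by auto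
    then obtain B where B: "\<And>j. j \<in> J \<Longrightarrow> A j = coin_at j -` B j \<inter> space coin_space"
      by metis
    have "(\<Inter>j\<in>J. A j) = {x. \<forall>j\<in>J. coin_at j x \<in> B j}"
      using J(2) by (auto simp: B space_coin_space)
    then have "prob (\<Inter>j\<in>J. A j) = (\<Prod>j\<in>J. measure coin (B j))"
      using J(3) by (simp add: measure_bits_cylinder)
    also have "\<dots> = (\<Prod>j\<in>J. prob (A j))"
      by (rule prod.cong) (simp_all add: B single)
    finally show "prob (\<Inter>j\<in>J. A j) = (\<Prod>j\<in>J. prob (A j))" .
  qed
qed

section \<open>Recodings by permutations are automorphisms of the coin space\<close>

lemma measurable_from_count_pair:
  "(f :: nat \<times> nat \<Rightarrow> nat) \<in> count_space UNIV \<Otimes>\<^sub>M count_space UNIV \<rightarrow>\<^sub>M count_space UNIV"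
  by (simp add: pair_measure_countable)

lemma measurable_recode_coord: "(\<lambda>x. recode \<rho> \<epsilon> x i) \<in> coin_space \<rightarrow>\<^sub>M count_space UNIV"
proof -
  have "(\<lambda>x. (coin_at (\<rho> (i, False)) x, coin_at (\<rho> (i, True)) x))
      \<in> coin_space \<rightarrow>\<^sub>M count_space UNIV \<Otimes>\<^sub>M count_space UNIV"
    by (intro measurable_Pair measurable_coin_at)
  from measurable_compose[OF this measurable_from_count_pair[of
      "\<lambda>(u, v). prod_encode (flip_if (\<epsilon> (i, False)) u, flip_if (\<epsilon> (i, True)) v)"]]
  show ?thesis by (simp add: recode_def split_def)
qed

text \<open>For injective \<rho> the symbols of a recoded sequence depend on disjoint pairs of sites,
  so they are independent.\<close>
lemma indep_recode_coords:
  assumes "inj \<rho>"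
  shows "prob_space.indep_vars coin_space (\<lambda>_. count_space UNIV) (\<lambda>i x. recode \<rho> \<epsilon> x i) UNIV"
proof -
  interpret prob_space coin_space by (rule prob_space_coin_space)
  define K where "K i = {\<rho> (i, False), \<rho> (i, True)}" for i
  have "disjoint_family_on K UNIV"
    unfolding disjoint_family_on_def K_def using assms by (auto simp: inj_eq)
  then have groups: "indep_vars (\<lambda>i. PiM (K i) (\<lambda>_. count_space UNIV))
      (\<lambda>i x. restrict (\<lambda>j. coin_at j x) (K i)) UNIV"
    by (intro indep_vars_restrict[OF indep_coins]) simp_all
  define Y where "Y i f = prod_encode (flip_if (\<epsilon> (i, False)) (f (\<rho> (i, False))),
      flip_if (\<epsilon> (i, True)) (f (\<rho> (i, True))))" for i and f :: "int \<times> bool \<Rightarrow> nat"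
  have "Y i \<in> PiM (K i) (\<lambda>_. count_space UNIV) \<rightarrow>\<^sub>M count_space UNIV" for i
  proof -
    have "(\<lambda>f. (f (\<rho> (i, False)), f (\<rho> (i, True))))
        \<in> PiM (K i) (\<lambda>_. count_space (UNIV :: nat set)) \<rightarrow>\<^sub>M count_space UNIV \<Otimes>\<^sub>M count_space UNIV"
      by (intro measurable_Pair measurable_component_singleton) (auto simp: K_def)
    from measurable_compose[OF this measurable_from_count_pair[of
        "\<lambda>(u, v). prod_encode (flip_if (\<epsilon> (i, False)) u, flip_if (\<epsilon> (i, True)) v)"]]
    show ?thesis by (simp add: Y_def[abs_def] split_def)
  qed
  then have "indep_vars (\<lambda>_. count_space UNIV) (\<lambda>i x. Y i (restrict (\<lambda>j. coin_at j x) (K i))) UNIV"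
    by (rule indep_vars_compose2[OF groups])
  moreover have "(\<lambda>x. Y i (restrict (\<lambda>j. coin_at j x) (K i))) = (\<lambda>x. recode \<rho> \<epsilon> x i)" for i
    by (auto simp: Y_def K_def recode_def)
  ultimately show ?thesis by simp
qed

lemma law_recode_coord:
  assumes "inj \<rho>"
  shows "distr coin_space (count_space UNIV) (\<lambda>x. recode \<rho> \<epsilon> x i) = measure_pmf coin_pair"
proof (rule measure_eqI_countable)
  interpret prob_space coin_space by (rule prob_space_coin_space)
  show "sets (distr coin_space (count_space UNIV) (\<lambda>x. recode \<rho> \<epsilon> x i)) = Pow UNIV"
    and "sets (measure_pmf coin_pair) = Pow UNIV" and "countable (UNIV :: nat set)"
    by simp_all
  fix v :: nat
  define j1 where "j1 = \<rho> (i, False)"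
  define j2 where "j2 = \<rho> (i, True)"
  have "j1 \<noteq> j2" using assms by (auto simp: j1_def j2_def inj_eq)
  define u where "u = flip_if (\<epsilon> (i, False)) (fst (prod_decode v))"
  define w where "w = flip_if (\<epsilon> (i, True)) (snd (prod_decode v))"
  define C where "C j = (if j = j1 then {u} else {w})" for j
  have "recode \<rho> \<epsilon> x i = v \<longleftrightarrow> coin_at j1 x = u \<and> coin_at j2 x = w" for x
  proof -
    have "recode \<rho> \<epsilon> x i = v \<longleftrightarrow> prod_decode (recode \<rho> \<epsilon> x i) = prod_decode v"
      by (metis prod_decode_inverse)
    also have "\<dots> \<longleftrightarrow> flip_if (\<epsilon> (i, False)) (coin_at j1 x) = fst (prod_decode v)
        \<and> flip_if (\<epsilon> (i, True)) (coin_at j2 x) = snd (prod_decode v)"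
      by (auto simp: recode_def j1_def j2_def prod_encode_inverse prod_eq_iff)
    finally show ?thesis by (simp add: u_def w_def flip_if_eq_iff)
  qed
  then have "(\<lambda>x. recode \<rho> \<epsilon> x i) -` {v} \<inter> space coin_space = {x. \<forall>j\<in>{j1, j2}. coin_at j x \<in> C j}"
    using \<open>j1 \<noteq> j2\<close> by (auto simp: C_def space_coin_space)
  then have "prob ((\<lambda>x. recode \<rho> \<epsilon> x i) -` {v} \<inter> space coin_space)
      = prob {x. \<forall>j\<in>{j1, j2}. coin_at j x \<in> C j}"
    by (simp only:)
  also have "\<dots> = (\<Prod>j\<in>{j1, j2}. measure coin (C j))"
    by (rule measure_bits_cylinder) simp
  also have "\<dots> = pmf coin u * pmf coin w"
    using \<open>j1 \<noteq> j2\<close> by (simp add: C_def measure_pmf_single)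
  also have "\<dots> = pmf coin_pair v"
  proof -
    have "pmf coin (flip_if e z) = pmf coin z" for e z
      by (auto simp: coin_def flip_if_def flip_def)
    moreover have "pmf coin_pair v = pmf (pair_pmf coin coin) (prod_decode v)"
      unfolding coin_pair_def by (metis inj_prod_encode pmf_map_inj' prod_decode_inverse)
    ultimately show ?thesis
      by (cases "prod_decode v") (simp add: u_def w_def pmf_pair)
  qed
  finally show "emeasure (distr coin_space (count_space UNIV) (\<lambda>x. recode \<rho> \<epsilon> x i)) {v}
      = emeasure (measure_pmf coin_pair) {v}"
    by (simp add: emeasure_distr measurable_recode_coord emeasure_eq_measure emeasure_pmf_single)
qed

lemma mpt_recode:
  assumes "inj \<rho>"
  shows "mpt coin_space (recode \<rho> \<epsilon>)"
proof -
  interpret prob_space coin_space by (rule prob_space_coin_space)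
  have rv: "(\<lambda>x. \<lambda>i\<in>UNIV. recode \<rho> \<epsilon> x i) \<in> coin_space \<rightarrow>\<^sub>M PiM UNIV (\<lambda>_. count_space UNIV)"
    by (rule measurable_restrict) (rule measurable_recode_coord)
  have "distr coin_space (PiM UNIV (\<lambda>_. count_space UNIV)) (\<lambda>x. \<lambda>i\<in>UNIV. recode \<rho> \<epsilon> x i)
      = PiM UNIV (\<lambda>i. distr coin_space (count_space UNIV) (\<lambda>x. recode \<rho> \<epsilon> x i))"
    using indep_vars_iff_distr_eq_PiM[where I = UNIV and M' = "\<lambda>_. count_space UNIV"
        and X = "\<lambda>i x. recode \<rho> \<epsilon> x i"] indep_recode_coords[OF assms] measurable_recode_coord
    by simp
  also have "\<dots> = PiM UNIV (\<lambda>_. measure_pmf coin_pair)"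
    by (simp add: law_recode_coord[OF assms])
  also have "\<dots> = coin_space"
    by (simp add: coin_space_def bernoulli_shift_space_def)
  finally show ?thesis
    using rv unfolding mpt_def restrict_UNIV
    by (simp add: measurable_cong_sets[OF refl sets_coin_space] distr_cong[OF refl sets_coin_space])
qed

lemma invertible_mpt_recode:
  assumes "bij \<rho>"
  shows "invertible_mpt coin_space (recode \<rho> \<epsilon>)"
  unfolding invertible_mpt_def space_coin_space
  using assms bij_is_inj bij_imp_bij_inv bij_recode inv_recode mpt_recode by metis

lemma finite_coin_pair: "finite (set_pmf coin_pair)"
  by (simp add: coin_pair_def coin_def)

text \<open>An invertible measure preserving map that a permutation recoding conjugates to the shift
  is Bernoulli: the recoding itself is the required isomorphism.\<close>
lemma bernoulli_if_conjugate_to_shift: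
  assumes U: "invertible_mpt coin_space U" and "bij \<sigma>"
    and conj: "\<And>x. recode \<sigma> \<delta> (U x) = shift (recode \<sigma> \<delta> x)"
  shows "bernoulli coin_space U"
proof -
  have top: "UNIV \<in> sets coin_space" by (metis sets.top space_coin_space)
  have whole: "restrict_space coin_space UNIV = coin_space"
    by (rule measure_eqI) (simp_all add: sets_restrict_space emeasure_restrict_space top)
  have iso: "mpt_iso coin_space U (bernoulli_shift_space coin_pair) shift"
    unfolding mpt_iso_def coin_space_def[symmetric]
  proof (intro exI[of _ UNIV] exI[of _ "recode \<sigma> \<delta>"] conjI)
    show "UNIV \<in> sets coin_space" by (rule top)
    show "emeasure coin_space (space coin_space - UNIV) = 0" by simp
    show "U ` UNIV \<subseteq> UNIV" "shift ` UNIV \<subseteq> UNIV" by simp_all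
    show "bij_betw (recode \<sigma> \<delta>) UNIV UNIV" using bij_recode[OF \<open>bij \<sigma>\<close>] .
    show "\<forall>x\<in>UNIV. recode \<sigma> \<delta> (U x) = shift (recode \<sigma> \<delta> x)" using conj by simp
    have "invertible_mpt coin_space (recode \<sigma> \<delta>)" by (rule invertible_mpt_recode[OF \<open>bij \<sigma>\<close>])
    then show "recode \<sigma> \<delta> \<in> restrict_space coin_space UNIV \<rightarrow>\<^sub>M restrict_space coin_space UNIV"
      and "inv_into UNIV (recode \<sigma> \<delta>)
        \<in> restrict_space coin_space UNIV \<rightarrow>\<^sub>M restrict_space coin_space UNIV"
      and "distr (restrict_space coin_space UNIV) (restrict_space coin_space UNIV) (recode \<sigma> \<delta>)
        = restrict_space coin_space UNIV"
      by (simp_all add: whole invertible_mpt_def mpt_def space_coin_space)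
  qed (simp_all add: top)
  show ?thesis
    unfolding bernoulli_def
    using prob_space_coin_space U finite_coin_pair iso by blast
qed

lemma bernoulli_shift: "bernoulli coin_space shift"
proof (rule bernoulli_if_conjugate_to_shift[where \<sigma> = id and \<delta> = "\<lambda>_. False"])
  show "invertible_mpt coin_space shift"
    unfolding shift_recode by (rule invertible_mpt_recode[OF bij_next_site])
qed (simp_all add: recode_id)

definition conj_shift :: "(int \<times> bool \<Rightarrow> int \<times> bool) \<Rightarrow> (int \<times> bool \<Rightarrow> bool)
    \<Rightarrow> (int \<Rightarrow> nat) \<Rightarrow> (int \<Rightarrow> nat)" where
  "conj_shift \<rho> \<epsilon> x = recode_inv \<rho> \<epsilon> (shift (recode \<rho> \<epsilon> x))"

text \<open>Recodings form a group under composition, so the conjugate is itself a recoding.\<close>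
lemma conj_shift_is_recode:
  "conj_shift \<rho> \<epsilon> = recode (\<rho> \<circ> next_site \<circ> inv \<rho>) (\<lambda>j. \<epsilon> (inv \<rho> j) \<noteq> \<epsilon> (next_site (inv \<rho> j)))"
  by (simp add: conj_shift_def[abs_def] shift_recode recode_comp o_assoc)

lemma bernoulli_conj_shift:
  assumes "bij \<rho>"
  shows "bernoulli coin_space (conj_shift \<rho> \<epsilon>)"
proof (rule bernoulli_if_conjugate_to_shift[OF _ assms])
  show "invertible_mpt coin_space (conj_shift \<rho> \<epsilon>)"
    unfolding conj_shift_is_recode
    by (intro invertible_mpt_recode bij_comp bij_next_site assms bij_imp_bij_inv)
  show "recode \<rho> \<epsilon> (conj_shift \<rho> \<epsilon> x) = shift (recode \<rho> \<epsilon> x)" for x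
    by (simp add: conj_shift_def recode_recode_inv[OF assms])
qed

lemma zpow_conj:
  assumes GH: "\<And>x. G (H x) = x" "\<And>x. H (G x) = x"
    and VV': "\<And>x. V (V' x) = x" "\<And>x. V' (V x) = x"
    and "space M = UNIV"
  shows "zpow M (\<lambda>x. G (V (H x))) k = (\<lambda>x. G (zpow M V k (H x)))"
proof -
  have inv_conj: "inv_into UNIV (\<lambda>x. G (V (H x))) = (\<lambda>x. G (V' (H x)))"
    by (rule inv_equality) (simp_all add: GH VV')
  have inv_V: "inv_into UNIV V = V'"
    by (rule inv_equality) (simp_all add: VV')
  have "((\<lambda>x. G (W (H x))) ^^ n) = (\<lambda>x. G ((W ^^ n) (H x)))" for W n
    by (induction n) (simp_all add: GH fun_eq_iff)
  then show ?thesis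
    unfolding zpow_def \<open>space M = UNIV\<close> inv_conj inv_V by simp
qed

definition unshift :: "(int \<Rightarrow> 'b) \<Rightarrow> int \<Rightarrow> 'b" where
  "unshift x = (\<lambda>i. x (i - 1))"

lemma shift_unshift: "shift (unshift x) = x" "unshift (shift x) = x"
  by (simp_all add: shift_def unshift_def)

lemma zpow_shift: "zpow coin_space shift k x = (\<lambda>i. x (i + k))"
proof -
  have "inv_into UNIV shift = (unshift :: (int \<Rightarrow> nat) \<Rightarrow> _)"
    by (rule inv_equality) (simp_all add: shift_unshift)
  moreover have "(shift ^^ n) y = (\<lambda>i. y (i + int n))" for n and y :: "int \<Rightarrow> nat"
    by (induction n arbitrary: y) (simp_all add: shift_def algebra_simps)
  moreover have "(unshift ^^ n) y = (\<lambda>i. y (i - int n))" for n and y :: "int \<Rightarrow> nat"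
    by (induction n arbitrary: y) (simp_all add: unshift_def algebra_simps)
  ultimately show ?thesis
    unfolding zpow_def space_coin_space by simp
qed

lemma zpow_conj_shift:
  assumes "bij \<rho>"
  shows "zpow coin_space (conj_shift \<rho> \<epsilon>) k x = recode_inv \<rho> \<epsilon> (zpow coin_space shift k (recode \<rho> \<epsilon> x))"
  unfolding conj_shift_def[abs_def]
  by (subst zpow_conj[where V' = unshift])
    (simp_all add: recode_inv_recode[OF assms] recode_recode_inv[OF assms] shift_unshift space_coin_space)

lemma zpreimage_shift_origin:
  "zpreimage coin_space shift k {x. coin_at (0, False) x = 1} = {x. coin_at (k, False) x = 1}"
  by (simp add: zpreimage_def zpow_shift space_coin_space coin_at_def)

lemma zpreimage_conj_shift_origin:
  assumes "bij \<rho>" "\<rho> (0, False) = (0, False)" "\<not> \<epsilon> (0, False)"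
  shows "zpreimage coin_space (conj_shift \<rho> \<epsilon>) k {x. coin_at (0, False) x = 1}
    = {x. flip_if (\<epsilon> (k, False)) (coin_at (\<rho> (k, False)) x) = 1}"
proof -
  have "inv \<rho> (0, False) = (0, False)"
    using assms(1,2) by (metis bij_is_inj inv_f_f)
  then have "coin_at (0, False) (recode_inv \<rho> \<epsilon> y) = coin_at (0, False) y" for y
    using assms(3) by (simp add: coin_at_recode flip_if_def)
  moreover have "coin_at (0, False) (zpow coin_space shift k y) = coin_at (k, False) y" for y
    by (simp add: zpow_shift coin_at_def)
  ultimately show ?thesis
    by (simp add: zpreimage_def zpow_conj_shift[OF assms(1)] space_coin_space coin_at_recode)
qed

lemma measure_two_coins:
  assumes "j \<noteq> j'"
  shows "measure coin_space {x. coin_at j x = 1 \<and> coin_at j' x = 1} = 1 / 4"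
proof -
  have "{x. coin_at j x = 1 \<and> coin_at j' x = 1} = {x. \<forall>i\<in>{j, j'}. coin_at i x \<in> {1}}" by auto
  then have "measure coin_space {x. coin_at j x = 1 \<and> coin_at j' x = 1} = (\<Prod>i\<in>{j, j'}. measure coin {1})"
    by (simp only: measure_bits_cylinder finite.insertI finite.emptyI)
  then show ?thesis
    using assms by (simp add: measure_pmf_single coin_def)
qed

section \<open>Choice of the site permutation\<close>

lemma extend_inj_to_permutation:
  fixes f :: "'a \<Rightarrow> 'a"
  assumes "countable (UNIV :: 'a set)" and "inj_on f D"
    and "infinite (- D)" and "infinite (- f ` D)"
  shows "\<exists>\<rho>. bij \<rho> \<and> (\<forall>x\<in>D. \<rho> x = f x)"
proof -
  obtain e1 where e1: "bij_betw e1 (- D) (UNIV :: nat set)"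
    using countableE_infinite[OF countable_subset[OF _ assms(1)] assms(3)] by blast
  obtain e2 where e2: "bij_betw e2 (- f ` D) (UNIV :: nat set)"
    using countableE_infinite[OF countable_subset[OF _ assms(1)] assms(4)] by blast
  define \<rho> where "\<rho> x = (if x \<in> D then f x else inv_into (- f ` D) e2 (e1 x))" for x
  have "bij_betw \<rho> D (f ` D)"
    using assms(2) by (simp add: bij_betw_cong[of D \<rho> f] \<rho>_def inj_on_imp_bij_betw)
  moreover have "bij_betw \<rho> (- D) (- f ` D)"
  proof -
    have "bij_betw (inv_into (- f ` D) e2 \<circ> e1) (- D) (- f ` D)"
      by (rule bij_betw_trans[OF e1 bij_betw_inv_into[OF e2]])
    then show ?thesis by (rule bij_betw_cong[THEN iffD1, rotated]) (simp add: \<rho>_def)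
  qed
  ultimately have "bij_betw \<rho> (D \<union> - D) (f ` D \<union> - f ` D)"
    by (rule bij_betw_combine) auto
  then show ?thesis by (auto simp: \<rho>_def)
qed

lemma infinite_range_pair: "infinite (range (\<lambda>k::int. (k, h)))"
  using finite_imageD[of "\<lambda>k::int. (k, h)" UNIV] by (auto simp: inj_on_def)

lemma exists_site_permutation:
  fixes a b :: "nat \<Rightarrow> int" and F :: "nat set"
  assumes a: "inj a" and b: "inj b" and a0: "\<forall>n. a n \<noteq> 0" and b0: "\<forall>n. b n \<noteq> 0"
  shows "\<exists>\<rho>. bij \<rho> \<and> \<rho> (0, False) = (0, False) \<and> (\<forall>n\<in>F. \<rho> (b n, False) = (a n, False))
             \<and> (\<forall>n. n \<notin> F \<longrightarrow> \<rho> (b n, False) = (b n, True))"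
proof -
  define D where "D = insert (0, False) (range (\<lambda>n. (b n, False)))"
  define f where "f j = (if j = (0, False) then (0, False) else if inv b (fst j) \<in> F
      then (a (inv b (fst j)), False) else (b (inv b (fst j)), True))" for j :: "int \<times> bool"
  have f0: "f (0, False) = (0, False)" by (simp add: f_def)
  have fb: "f (b n, False) = (if n \<in> F then (a n, False) else (b n, True))" for n
    using b0 b by (auto simp: f_def inv_f_f)
  have "inj_on f D"
    unfolding D_def inj_on_def using a0 b0
    by (auto simp: f0 fb inj_eq[OF a] inj_eq[OF b] split: if_splits)
  moreover have "infinite (- D)"
    by (rule infinite_super[OF _ infinite_range_pair[of True]]) (auto simp: D_def)
  moreover have "infinite (- f ` D)"
  proof -
    have "f (b n, False) \<in> (\<lambda>n. (a n, False)) ` F \<union> (\<lambda>n. (b n, True)) ` (- F)" for n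
      by (simp add: fb)
    then have image: "f ` D \<subseteq> insert (0, False) ((\<lambda>n. (a n, False)) ` F \<union> (\<lambda>n. (b n, True)) ` (- F))"
      unfolding D_def using f0 by blast
    show ?thesis
    proof (cases "finite (- F)")
      case True
      have "range (\<lambda>k::int. (k, True)) - (\<lambda>n. (b n, True)) ` (- F) \<subseteq> - f ` D"
        using image by auto
      moreover have "infinite (range (\<lambda>k::int. (k, True)) - (\<lambda>n. (b n, True)) ` (- F))"
        using True infinite_range_pair by (intro Diff_infinite_finite) simp_all
      ultimately show ?thesis using infinite_super by blast
    next
      case False
      have "(\<lambda>n. (a n, False)) ` (- F) \<subseteq> - f ` D"
        using image a0 by (auto simp: inj_eq[OF a])
      moreover have "infinite ((\<lambda>n. (a n, False)) ` (- F))"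
        using False by (subst finite_image_iff) (simp_all add: inj_on_def inj_eq[OF a])
      ultimately show ?thesis using infinite_super by blast
    qed
  qed
  ultimately obtain \<rho> where "bij \<rho>" "\<forall>x\<in>D. \<rho> x = f x"
    using extend_inj_to_permutation[of f D] by auto
  then show ?thesis by (auto simp: D_def f0 fb)
qed

theorem lemma4p1:
  fixes a b :: "nat \<Rightarrow> int" and F :: "nat set"
  assumes "inj a" and "inj b" and "\<forall>n. a n \<noteq> 0" and "\<forall>n. b n \<noteq> 0"
  shows "\<exists>(M :: (int \<Rightarrow> nat) measure) T S A.
           prob_space M \<and> bernoulli M T \<and> bernoulli M S \<and> A \<in> sets M \<and>
           (\<forall>n. measure M (zpreimage M T (a n) A \<inter> zpreimage M S (b n) A)
                 = (if n \<in> F then 0 else 1 / 4))"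
proof -
  obtain \<rho> where \<rho>: "bij \<rho>" "\<rho> (0, False) = (0, False)"
      "\<forall>n\<in>F. \<rho> (b n, False) = (a n, False)" "\<forall>n. n \<notin> F \<longrightarrow> \<rho> (b n, False) = (b n, True)"
    using exists_site_permutation[OF assms] by blast
  define \<epsilon> where "\<epsilon> j = (\<exists>n\<in>F. j = (b n, False))" for j
  define A where "A = {x. coin_at (0, False) x = 1}"
  have A: "A \<in> sets coin_space"
    using measurable_sets[OF measurable_coin_at, of "{1}" "(0, False)"]
    by (simp add: A_def space_coin_space vimage_def)
  have \<epsilon>_b: "\<epsilon> (b n, False) \<longleftrightarrow> n \<in> F" for n
    using \<open>inj b\<close> by (auto simp: \<epsilon>_def inj_eq)
  have "\<not> \<epsilon> (0, False)" using assms(4) by (auto simp: \<epsilon>_def)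
  then have S_pre: "zpreimage coin_space (conj_shift \<rho> \<epsilon>) k A
      = {x. flip_if (\<epsilon> (k, False)) (coin_at (\<rho> (k, False)) x) = 1}" for k
    unfolding A_def using \<rho>(1,2) by (rule zpreimage_conj_shift_origin[rotated 2])
  have T_pre: "zpreimage coin_space shift k A = {x. coin_at (k, False) x = 1}" for k
    unfolding A_def by (rule zpreimage_shift_origin)
  have events: "zpreimage coin_space shift (a n) A \<inter> zpreimage coin_space (conj_shift \<rho> \<epsilon>) (b n) A
      = (if n \<in> F then {} else {x. coin_at (a n, False) x = 1 \<and> coin_at (b n, True) x = 1})" for n
    using \<rho>(3,4) by (auto simp: S_pre T_pre \<epsilon>_b flip_if_def flip_def)
  have "measure coin_space (zpreimage coin_space shift (a n) A
      \<inter> zpreimage coin_space (conj_shift \<rho> \<epsilon>) (b n) A) = (if n \<in> F then 0 else 1 / 4)" for n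
    using measure_two_coins[of "(a n, False)" "(b n, True)"] by (simp add: events)
  then show ?thesis
    using prob_space_coin_space bernoulli_shift bernoulli_conj_shift[OF \<rho>(1)] A by blast
qed

end
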